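(* Let $n\ge2$ and let $f:\mathbb R^n\to\mathbb R^n$ be an injective map (not assumed continuous) such that $f(A^\circ)=f(A)^\circ$ for every $A\in\mathcal K_0^n$. Then $f$ is an orthogonal linear map.
   Context: $\mathcal K_0^n$: closed convex subsets of $\mathbb R^n$ containing $0$. Polar: $A^\circ=\{x:\sup_{a\in A}\langle a,x\rangle\le1\}$. $f(A)=\{f(a):a\in A\}$. *)

theory Defs
  imports "HOL-Analysis.Analysis"
begin

definition K0 :: "('a::euclidean_space) set set" where
  "K0 = {A. closed A \<and> convex A \<and> 0 \<in> A}"

definition polar :: "('a::euclidean_space) set \<Rightarrow> 'a set" where
  "polar A = {x. \<forall>a\<in>A. inner a x \<le> 1}"

end

theory Submission
  imports Defs
begin

text \<open>
  Polarity preservation forces \<open>f 0 = 0\<close>, surjectivity, and, by the bipolar theorem, that \<open>f\<close>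
  maps \<open>K\<^sub>0\<close> to itself. The images of the segments \<open>[0, y]\<close> and \<open>[0, -y]\<close> are closed convex
  sets meeting only at \<open>0\<close> whose union is convex, so they lie on opposite rays; hence
  \<open>f [0, y] = [0, f y]\<close>, and polarity preservation for segments says that \<open>f\<close> preserves the relation
  \<open>\<langle>x, y\<rangle> \<le> 1\<close>. It follows that \<open>f\<close> maps rays to rays, \<open>f (t p) = \<phi>(t) f p\<close> with \<open>\<phi>\<close>
  independent of \<open>p\<close> (this is where \<open>n \<ge> 2\<close> is used), and
  \<open>\<langle>f x, f v\<rangle> = \<phi>(\<langle>x, v\<rangle>)\<close> for \<open>\<langle>x, v\<rangle> > 0\<close>, while orthogonality is preserved. The function \<open>\<phi>\<close> is
  multiplicative and increasing, and Pythagoras applied to \<open>f\<close> and to \<open>f\<^sup>-\<^sup>1\<close> (whose scale is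
  \<open>\<phi>\<^sup>-\<^sup>1\<close>) gives \<open>\<phi>(1 + s\<^sup>2) = 1 + \<phi>(s)\<^sup>2\<close>, which pins \<open>\<phi>\<close> down to the identity. So \<open>f\<close> preserves
  inner products.
\<close>

lemma polar_eq_INT: "polar A = (\<Inter>a\<in>A. {x. inner a x \<le> 1})"
  by (auto simp: polar_def)

lemma polar_in_K0: "polar A \<in> K0"
  unfolding K0_def polar_eq_INT
  by (auto intro!: closed_INT closed_halfspace_le convex_INT convex_halfspace_le)

lemma polar_UNIV: "polar UNIV = {0}"
proof -
  have "x = 0" if "x \<in> polar UNIV" for x
  proof (rule ccontr)
    assume "x \<noteq> 0"
    moreover have "inner ((2 / inner x x) *\<^sub>R x) x \<le> 1"
      using that unfolding polar_def by blast
    ultimately show False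
      by simp
  qed
  then show ?thesis
    by (auto simp: polar_def)
qed

lemma polar_polar:
  assumes "A \<in> K0"
  shows "polar (polar A) = A"
proof
  show "A \<subseteq> polar (polar A)"
    by (auto simp: polar_def inner_commute)
next
  show "polar (polar A) \<subseteq> A"
  proof
    fix z assume z: "z \<in> polar (polar A)"
    show "z \<in> A"
    proof (rule ccontr)
      assume "z \<notin> A"
      then obtain a b where ab: "inner a z < b" "\<forall>x\<in>A. b < inner a x"
        using separating_hyperplane_closed_point[of A z] assms by (auto simp: K0_def)
      have b: "b < 0"
        using ab assms by (auto simp: K0_def)
      have "(1/b) *\<^sub>R a \<in> polar A"
        using ab(2) b by (auto simp: polar_def inner_commute divide_le_eq_1)
      then have "inner ((1/b) *\<^sub>R a) z \<le> 1"
        using z unfolding polar_def[of "polar A"] by blast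
      moreover have "1 < inner a z / b"
        using ab(1) b by (simp add: less_divide_eq_1)
      ultimately show False
        by (simp add: inner_commute)
    qed
  qed
qed

lemma in_segment_0: "x \<in> closed_segment 0 y \<longleftrightarrow> (\<exists>u. 0 \<le> u \<and> u \<le> 1 \<and> x = u *\<^sub>R y)"
  by (simp add: in_segment)

lemma segment_0_in_K0: "closed_segment 0 y \<in> K0"
  by (simp add: K0_def)

lemma polar_closed_segment_0: "polar (closed_segment 0 y) = {x. inner y x \<le> 1}"
proof -
  have "inner (u *\<^sub>R y) x \<le> 1" if "inner y x \<le> 1" "0 \<le> u" "u \<le> 1" for x u
    using that mult_left_le_one_le[of "inner y x" u] mult_nonneg_nonpos[of u "inner y x"]
    by (cases "0 \<le> inner y x") auto
  then show ?thesis
    by (auto simp: polar_def in_segment)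
qed

text \<open>The segment from \<open>p\<close> to \<open>q\<close> is connected and covered by \<open>C\<close> and \<open>D\<close>, so it passes
  through \<open>C \<inter> D \<subseteq> {0}\<close>.\<close>
lemma opposite_of_convex_Un:
  fixes C D :: "'a::real_normed_vector set"
  assumes "closed C" "closed D" "convex (C \<union> D)" "C \<inter> D \<subseteq> {0}"
    and "p \<in> C" "q \<in> D" "p \<noteq> 0" "q \<noteq> 0"
  shows "\<exists>l>0. p = - l *\<^sub>R q"
proof -
  have "closed_segment p q \<subseteq> C \<union> D"
    using assms by (intro closed_segment_subset) auto
  then have "C \<inter> D \<inter> closed_segment p q \<noteq> {}"
    using connected_closedD[OF connected_segment(1)[of p q]] assms by blast
  then have "0 \<in> closed_segment p q"
    using assms(4) by auto
  then obtain u where u: "0 \<le> u" "u \<le> 1" "0 = (1 - u) *\<^sub>R p + u *\<^sub>R q"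
    by (auto simp: in_segment)
  then have "u \<noteq> 0" "u \<noteq> 1"
    using assms(7,8) by auto
  have "(1 - u) *\<^sub>R p = - u *\<^sub>R q"
    using u(3) by (simp add: eq_neg_iff_add_eq_0)
  have "p = (1 / (1 - u)) *\<^sub>R ((1 - u) *\<^sub>R p)"
    using \<open>u \<noteq> 1\<close> by simp
  also have "\<dots> = - (u / (1 - u)) *\<^sub>R q"
    unfolding \<open>(1 - u) *\<^sub>R p = - u *\<^sub>R q\<close> by simp
  finally have "p = - (u / (1 - u)) *\<^sub>R q" .
  moreover have "0 < u / (1 - u)"
    using u \<open>u \<noteq> 0\<close> \<open>u \<noteq> 1\<close> by simp
  ultimately show ?thesis
    by blast
qed

lemma exists_common_dual:
  fixes p p' :: "'a::real_inner"
  assumes "p \<noteq> 0" and "\<And>l. p' \<noteq> l *\<^sub>R p"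
  shows "\<exists>q. inner p q = 1 \<and> inner p' q = 1"
proof -
  define w where "w = p' - (inner p' p / inner p p) *\<^sub>R p"
  have "w \<noteq> 0"
    using assms(2) by (auto simp: w_def)
  have pw: "inner p w = 0"
    using assms(1) by (simp add: w_def inner_diff_right inner_commute)
  then have p'w: "inner p' w = inner w w"
    by (simp add: w_def inner_diff_left)
  define q where
    "q = (1 / inner p p) *\<^sub>R p + ((1 - inner p' p / inner p p) / inner w w) *\<^sub>R w"
  have "inner p q = 1" "inner p' q = 1"
    using assms(1) \<open>w \<noteq> 0\<close> pw p'w by (simp_all add: q_def inner_add_right inner_commute)
  then show ?thesis
    by blast
qed

lemma multiplicative_shift_fixes_Rats:
  fixes G :: "real \<Rightarrow> real"
  assumes mult: "\<And>a b. 0 < a \<Longrightarrow> 0 < b \<Longrightarrow> G (a * b) = G a * G b"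
    and one: "G 1 = 1"
    and shift: "\<And>x. 0 < x \<Longrightarrow> G (1 + x) = 1 + G x"
  shows "0 < r \<Longrightarrow> r \<in> \<rat> \<Longrightarrow> G r = r"
proof -
  have nat: "G (real n) = real n" if "1 \<le> n" for n :: nat
    using that
  proof (induction n rule: dec_induct)
    case base
    then show ?case using one by simp
  next
    case (step m)
    then show ?case using shift[of "real m"] by (simp add: add.commute)
  qed
  assume "0 < r" "r \<in> \<rat>"
  then obtain a b :: int where ab: "0 < b" "r = of_int a / of_int b"
    using Rats_cases' by metis
  then have "0 < a"
    using \<open>0 < r\<close> by (simp add: zero_less_divide_iff)
  have "of_int b * G r = G (of_int b * r)"
    using mult[of "of_int b" r] nat[of "nat b"] \<open>0 < b\<close> \<open>0 < r\<close> by simp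
  also have "\<dots> = of_int b * r"
    using nat[of "nat a"] ab \<open>0 < a\<close> by simp
  finally show "G r = r"
    using \<open>0 < b\<close> by simp
qed

lemma multiplicative_shift_eq_id:
  fixes G :: "real \<Rightarrow> real"
  assumes mult: "\<And>a b. 0 < a \<Longrightarrow> 0 < b \<Longrightarrow> G (a * b) = G a * G b"
    and mono: "\<And>s t. 0 < s \<Longrightarrow> s < t \<Longrightarrow> G s < G t"
    and one: "G 1 = 1"
    and shift: "\<And>x. 0 < x \<Longrightarrow> G (1 + x) = 1 + G x"
    and "0 < x"
  shows "G x = x"
proof -
  have rat: "0 < r \<Longrightarrow> r \<in> \<rat> \<Longrightarrow> G r = r" for r
    using multiplicative_shift_fixes_Rats[OF mult one shift] by blast
  show ?thesis
  proof (rule linorder_cases)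
    assume "x = G x"
    then show ?thesis by simp
  next
    assume "x < G x"
    then obtain r where "r \<in> \<rat>" "x < r" "r < G x"
      using Rats_dense_in_real by blast
    then show ?thesis
      using mono[of x r] rat[of r] \<open>0 < x\<close> by simp
  next
    assume "G x < x"
    then obtain r where "r \<in> \<rat>" "max (G x) 0 < r" "r < x"
      using Rats_dense_in_real[of "max (G x) 0" x] \<open>0 < x\<close> by auto
    then show ?thesis
      using mono[of r x] rat[of r] by simp
  qed
qed

locale polar_preserving =
  fixes f :: "'a::euclidean_space \<Rightarrow> 'a"
  assumes inj: "inj f"
    and image_polar_K0: "A \<in> K0 \<Longrightarrow> f ` polar A = polar (f ` A)"
begin

lemma map_0: "f 0 = 0"
proof -
  have "{f 0} = polar (range f)"
    using image_polar_K0[of UNIV] by (simp add: K0_def polar_UNIV)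
  moreover have "0 \<in> polar (range f)"
    by (simp add: polar_def)
  ultimately show ?thesis
    by (metis singletonD)
qed

lemma eq_0_iff: "f x = 0 \<longleftrightarrow> x = 0"
  using inj map_0 by (metis injD)

lemma surj: "surj f"
proof -
  have "polar {0} = (UNIV :: 'a set)"
    by (simp add: polar_def)
  then show ?thesis
    using image_polar_K0[of "{0}"] map_0 by (simp add: K0_def polar_def)
qed

lemma image_K0:
  assumes "A \<in> K0"
  shows "f ` A \<in> K0"
proof -
  have "f ` A = polar (f ` polar A)"
    using polar_polar[OF assms] image_polar_K0[OF polar_in_K0, of A] by simp
  then show ?thesis
    by (simp add: polar_in_K0)
qed

lemma image_segment_0_K0: "f ` closed_segment 0 y \<in> K0"
  by (simp add: image_K0 segment_0_in_K0)

lemma image_segment_0_opposite: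
  assumes "y \<noteq> 0" "p \<in> f ` closed_segment 0 y" "p \<noteq> 0"
  shows "\<exists>l>0. p = - l *\<^sub>R f (-y)"
proof (rule opposite_of_convex_Un)
  have "0 \<in> closed_segment (-y) y"
    using midpoint_in_closed_segment[of "-y" y] by (simp add: midpoint_def)
  then have "closed_segment 0 y \<union> closed_segment 0 (-y) = closed_segment (-y) y"
    using Un_closed_segment[of 0 "-y" y] by (simp add: closed_segment_commute Un_commute)
  moreover have "f ` closed_segment (-y) y \<in> K0"
    using \<open>0 \<in> closed_segment (-y) y\<close> by (intro image_K0) (simp add: K0_def)
  ultimately show "convex (f ` closed_segment 0 y \<union> f ` closed_segment 0 (-y))"
    by (simp add: K0_def flip: image_Un)
  have "closed_segment 0 y \<inter> closed_segment 0 (-y) \<subseteq> {0}"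
  proof
    fix z assume "z \<in> closed_segment 0 y \<inter> closed_segment 0 (-y)"
    then obtain a b where "0 \<le> a" "0 \<le> b" "z = a *\<^sub>R y" "z = - b *\<^sub>R y"
      by (auto simp: in_segment)
    then have "(a + b) *\<^sub>R y = 0" "z = a *\<^sub>R y"
      by (simp_all add: scaleR_add_left) (metis add.left_inverse)
    then show "z \<in> {0}"
      using assms(1) \<open>0 \<le> a\<close> \<open>0 \<le> b\<close> by simp
  qed
  then show "f ` closed_segment 0 y \<inter> f ` closed_segment 0 (-y) \<subseteq> {0}"
    using map_0 by (auto simp flip: image_Int[OF inj])
  show "closed (f ` closed_segment 0 y)" "closed (f ` closed_segment 0 (-y))"
    using image_segment_0_K0 by (auto simp: K0_def)
  show "f (-y) \<noteq> 0"
    using assms(1) eq_0_iff by simp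
qed (use assms in auto)

lemma image_segment_0_subset_ray:
  assumes "y \<noteq> 0" "p \<in> f ` closed_segment 0 y"
  shows "\<exists>c\<ge>0. p = c *\<^sub>R f y"
proof (cases "p = 0")
  case False
  obtain l where l: "0 < l" "p = - l *\<^sub>R f (-y)"
    using image_segment_0_opposite[OF assms False] by blast
  obtain m where m: "0 < m" "f y = - m *\<^sub>R f (-y)"
    using image_segment_0_opposite[OF assms(1), of "f y"] assms(1) eq_0_iff by auto
  have "p = (l / m) *\<^sub>R f y"
    using l m by simp
  then show ?thesis
    using l m by (metis divide_nonneg_pos less_eq_real_def)
qed (auto intro: exI[of _ 0])

lemma segment_0_subset_image:
  assumes "p \<in> f ` closed_segment 0 y"
  shows "closed_segment 0 p \<subseteq> f ` closed_segment 0 y"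
  using assms image_segment_0_K0[of y] map_0 by (intro closed_segment_subset) (auto simp: K0_def)

lemma image_segment_0_subset: "f ` closed_segment 0 y \<subseteq> closed_segment 0 (f y)"
proof (cases "y = 0")
  case True
  then show ?thesis using map_0 by simp
next
  case False
  show ?thesis
  proof
    fix p assume p: "p \<in> f ` closed_segment 0 y"
    obtain c where c: "0 \<le> c" "p = c *\<^sub>R f y"
      using image_segment_0_subset_ray[OF False p] by blast
    obtain t where t: "0 \<le> t" "t \<le> 1" "p = f (t *\<^sub>R y)"
      using p by (auto simp: in_segment)
    have "c \<le> 1"
    proof (rule ccontr)
      assume "\<not> c \<le> 1"
      then have "f y \<in> closed_segment 0 p"
        using c by (auto simp: in_segment intro!: exI[of _ "1/c"])
      then have "y \<in> closed_segment 0 (t *\<^sub>R y)"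
        using segment_0_subset_image[of p "t *\<^sub>R y"] t inj_image_mem_iff[OF inj] by auto
      then obtain s where s: "0 \<le> s" "s \<le> 1" "y = (s * t) *\<^sub>R y"
        by (auto simp: in_segment)
      then have "(1 - s * t) *\<^sub>R y = 0"
        by (metis diff_self scaleR_left_diff_distrib scaleR_one)
      then have "s * t = 1"
        using False by simp
      then have "t = 1"
        using s t mult_left_le_one_le[of t s] by linarith
      then have "(c - 1) *\<^sub>R f y = 0"
        using c t by (simp add: algebra_simps)
      then show False
        using \<open>\<not> c \<le> 1\<close> False eq_0_iff by simp
    qed
    then show "p \<in> closed_segment 0 (f y)"
      using c by (auto simp: in_segment)
  qed
qed

lemma image_segment_0: "f ` closed_segment 0 y = closed_segment 0 (f y)"
  using image_segment_0_subset segment_0_subset_image[of "f y" y] by blast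

lemma in_segment_0_iff: "f x \<in> closed_segment 0 (f y) \<longleftrightarrow> x \<in> closed_segment 0 y"
  using image_segment_0[of y] inj_image_mem_iff[OF inj] by metis

lemma inner_image_le_1_iff: "inner (f x) (f y) \<le> 1 \<longleftrightarrow> inner x y \<le> 1"
proof -
  have "f ` polar (closed_segment 0 y) = polar (closed_segment 0 (f y))"
    using image_polar_K0[OF segment_0_in_K0] image_segment_0 by simp
  then show ?thesis
    using inj_image_mem_iff[OF inj, of x "polar (closed_segment 0 y)"]
    by (simp add: polar_closed_segment_0 inner_commute)
qed

lemma image_polar: "f ` polar X = polar (f ` X)"
proof -
  have "f x \<in> polar (f ` X) \<longleftrightarrow> x \<in> polar X" for x
    by (simp add: polar_def inner_image_le_1_iff)
  show ?thesis
  proof (rule set_eqI)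
    fix z
    obtain x where "z = f x"
      using surj by (metis surjD)
    then show "z \<in> f ` polar X \<longleftrightarrow> z \<in> polar (f ` X)"
      using \<open>f x \<in> polar (f ` X) \<longleftrightarrow> x \<in> polar X\<close> inj_image_mem_iff[OF inj] by simp
  qed
qed

lemma polar_preserving_inv: "polar_preserving (inv f)"
proof
  show "inj (inv f)"
    using surj by (rule surj_imp_inj_inv)
  fix A :: "'a set"
  have "f ` inv f ` A = A"
    using surj by (simp add: image_image surj_f_inv_f)
  then have "f ` polar (inv f ` A) = polar A"
    using image_polar[of "inv f ` A"] by simp
  then show "inv f ` polar A = polar (inv f ` A)"
    using inj by (metis image_inv_f_f)
qed

lemma image_scaleR:
  assumes p: "p \<noteq> 0" and t: "0 < t"
  shows "\<exists>c>0. f (t *\<^sub>R p) = c *\<^sub>R f p \<and> (t < 1 \<longrightarrow> c < 1)"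
proof (cases "t \<le> 1")
  case True
  have "t *\<^sub>R p \<in> closed_segment 0 p"
    using True t by (auto simp: in_segment_0 intro!: exI[of _ t])
  then have "f (t *\<^sub>R p) \<in> closed_segment 0 (f p)"
    by (simp only: in_segment_0_iff)
  then obtain c where c: "0 \<le> c" "c \<le> 1" "f (t *\<^sub>R p) = c *\<^sub>R f p"
    by (auto simp: in_segment_0)
  have "t *\<^sub>R p \<noteq> 0"
    using p t by simp
  then have "c \<noteq> 0"
    using c(3) eq_0_iff by fastforce
  have "c < 1" if "t < 1"
  proof (rule ccontr)
    assume "\<not> c < 1"
    then have "f (t *\<^sub>R p) = f p"
      using c by simp
    then have "(t - 1) *\<^sub>R p = 0"
      using inj by (simp add: injD algebra_simps)
    then show False
      using that p by simp
  qed
  then show ?thesis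
    using c \<open>c \<noteq> 0\<close> by (intro exI[of _ c]) simp
next
  case False
  have "p \<in> closed_segment 0 (t *\<^sub>R p)"
    using False t by (auto simp: in_segment_0 intro!: exI[of _ "1/t"])
  then have "f p \<in> closed_segment 0 (f (t *\<^sub>R p))"
    by (simp only: in_segment_0_iff)
  then obtain s where s: "0 \<le> s" "s \<le> 1" "f p = s *\<^sub>R f (t *\<^sub>R p)"
    by (auto simp: in_segment_0)
  have "s \<noteq> 0"
    using s(3) p eq_0_iff by fastforce
  then have "f (t *\<^sub>R p) = (1/s) *\<^sub>R f p"
    using s(3) by simp
  then show ?thesis
    using s \<open>s \<noteq> 0\<close> False by (intro exI[of _ "1/s"]) simp
qed

lemma image_scaleR_surj:
  assumes "p \<noteq> 0" "1 \<le> l"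
  shows "\<exists>t\<ge>1. f (t *\<^sub>R p) = l *\<^sub>R f p"
proof -
  obtain z where z: "f z = l *\<^sub>R f p"
    using surj by (metis surjD)
  have "f p \<in> closed_segment 0 (f z)"
    using z assms by (auto simp: in_segment_0 intro!: exI[of _ "1/l"])
  then have "p \<in> closed_segment 0 z"
    by (simp only: in_segment_0_iff)
  then obtain s where s: "0 \<le> s" "s \<le> 1" "p = s *\<^sub>R z"
    by (auto simp: in_segment_0)
  then have "s \<noteq> 0" "z = (1/s) *\<^sub>R p"
    using assms(1) by auto
  then show ?thesis
    using s z by (intro exI[of _ "1/s"]) simp
qed

lemma inner_image_eq_1:
  assumes "inner x v = 1"
  shows "inner (f x) (f v) = 1"
proof (rule ccontr)
  define a where "a = inner (f x) (f v)"
  assume "inner (f x) (f v) \<noteq> 1"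
  moreover have "a \<le> 1"
    using inner_image_le_1_iff[of x v] assms by (simp add: a_def)
  ultimately have "a < 1"
    by (simp add: a_def)
  obtain l where l: "1 < l" "l * a \<le> 1"
  proof (cases "a \<le> 0")
    case True
    then show ?thesis using that[of 2] by simp
  next
    case False
    then show ?thesis using that[of "1/a"] \<open>a < 1\<close> by simp
  qed
  have "x \<noteq> 0"
    using assms by auto
  then obtain t where t: "1 \<le> t" "f (t *\<^sub>R x) = l *\<^sub>R f x"
    using image_scaleR_surj[of x l] l by auto
  then have "inner (t *\<^sub>R x) v \<le> 1"
    using inner_image_le_1_iff[of "t *\<^sub>R x" v] l by (simp add: a_def)
  then have "t = 1"
    using t assms by simp
  then have "(l - 1) *\<^sub>R f x = 0"
    using t by (simp add: algebra_simps)
  then show False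
    using l \<open>x \<noteq> 0\<close> eq_0_iff by simp
qed

definition ray_coeff :: "real \<Rightarrow> 'a \<Rightarrow> real" where
  "ray_coeff t p = inner (f (t *\<^sub>R p)) (f p) / inner (f p) (f p)"

lemma ray_coeff:
  assumes "p \<noteq> 0" "0 < t"
  shows "f (t *\<^sub>R p) = ray_coeff t p *\<^sub>R f p" "0 < ray_coeff t p"
    and "t < 1 \<Longrightarrow> ray_coeff t p < 1"
proof -
  obtain c where c: "0 < c" "f (t *\<^sub>R p) = c *\<^sub>R f p" "t < 1 \<longrightarrow> c < 1"
    using image_scaleR[OF assms] by blast
  moreover have "ray_coeff t p = c"
    using c assms eq_0_iff by (simp add: ray_coeff_def)
  ultimately show "f (t *\<^sub>R p) = ray_coeff t p *\<^sub>R f p" "0 < ray_coeff t p"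
    and "t < 1 \<Longrightarrow> ray_coeff t p < 1"
    by auto
qed

lemma ray_coeff_dual:
  assumes "inner p q = 1" "0 < t"
  shows "ray_coeff t p * ray_coeff (1/t) q = 1"
proof -
  have "p \<noteq> 0" "q \<noteq> 0"
    using assms by auto
  have "inner (t *\<^sub>R p) ((1/t) *\<^sub>R q) = 1"
    using assms by simp
  then have "inner (f (t *\<^sub>R p)) (f ((1/t) *\<^sub>R q)) = 1"
    by (rule inner_image_eq_1)
  then have "ray_coeff t p * ray_coeff (1/t) q * inner (f p) (f q) = 1"
    using ray_coeff(1) \<open>p \<noteq> 0\<close> \<open>q \<noteq> 0\<close> assms(2) by (simp add: mult_ac)
  then show ?thesis
    using inner_image_eq_1[OF assms(1)] by simp
qed

lemma ray_coeff_common_dual: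
  assumes "inner p q = 1" "inner p' q = 1" "0 < t"
  shows "ray_coeff t p = ray_coeff t p'"
proof -
  have "ray_coeff t p * ray_coeff (1/t) q = ray_coeff t p' * ray_coeff (1/t) q"
    using ray_coeff_dual assms by simp
  moreover have "q \<noteq> 0"
    using assms by auto
  ultimately show ?thesis
    using ray_coeff(2)[of q "1/t"] assms by simp
qed

end

locale polar_preserving_2 = polar_preserving f for f :: "'a::euclidean_space \<Rightarrow> 'a" +
  assumes DIM_ge_2: "2 \<le> DIM('a)"
begin

lemma ray_coeff_indep:
  assumes p: "p \<noteq> 0" and p': "p' \<noteq> 0" and t: "0 < t"
  shows "ray_coeff t p = ray_coeff t p'"
proof (cases "\<exists>l. p' = l *\<^sub>R p")
  case False
  then show ?thesis
    using exists_common_dual[OF p] ray_coeff_common_dual t by blast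
next
  case True
  then obtain l where l: "p' = l *\<^sub>R p"
    by blast
  obtain w where w: "w \<noteq> 0" "inner p w = 0"
    using orthogonal_to_vector_exists[OF DIM_ge_2, of p] by (auto simp: orthogonal_def)
  have "w \<noteq> m *\<^sub>R p" for m
    using w p by auto
  then obtain q1 where q1: "inner p q1 = 1" "inner w q1 = 1"
    using exists_common_dual[OF p] by blast
  have "p' \<noteq> m *\<^sub>R w" for m
  proof
    assume "p' = m *\<^sub>R w"
    then have "l * inner p p = 0"
      using l w(2) by (metis inner_scaleR_right mult_zero_right)
    then show False
      using p p' l by simp
  qed
  then obtain q2 where q2: "inner w q2 = 1" "inner p' q2 = 1"
    using exists_common_dual[OF w(1)] by blast
  show ?thesis
    using ray_coeff_common_dual[OF q1 t] ray_coeff_common_dual[OF q2 t] by simp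
qed

definition unit_vector :: 'a where
  "unit_vector = (SOME b. b \<in> Basis)"

lemma unit_vector: "inner unit_vector unit_vector = 1" "unit_vector \<noteq> 0"
proof -
  have "unit_vector \<in> Basis"
    unfolding unit_vector_def using nonempty_Basis by (simp add: some_in_eq)
  then show "inner unit_vector unit_vector = 1" "unit_vector \<noteq> 0"
    by auto
qed

definition ray_scale :: "real \<Rightarrow> real" where
  "ray_scale t = ray_coeff t unit_vector"

lemma image_scaleR_eq:
  assumes "p \<noteq> 0" "0 < t"
  shows "f (t *\<^sub>R p) = ray_scale t *\<^sub>R f p"
  using ray_coeff(1)[OF assms] ray_coeff_indep[OF assms(1) unit_vector(2) assms(2)]
  by (simp add: ray_scale_def)

lemma ray_scale_pos: "0 < t \<Longrightarrow> 0 < ray_scale t"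
  using ray_coeff(2)[OF unit_vector(2)] by (simp add: ray_scale_def)

lemma ray_scale_less_1: "0 < t \<Longrightarrow> t < 1 \<Longrightarrow> ray_scale t < 1"
  using ray_coeff(3)[OF unit_vector(2)] by (simp add: ray_scale_def)

lemma ray_scale_inverse: "0 < t \<Longrightarrow> ray_scale t * ray_scale (1/t) = 1"
  using ray_coeff_dual[OF unit_vector(1)] by (simp add: ray_scale_def)

lemma ray_scale_1: "ray_scale 1 = 1"
proof -
  have "(ray_scale 1 - 1) * (ray_scale 1 + 1) = 0"
    using ray_scale_inverse[of 1] by (simp add: algebra_simps)
  then show ?thesis
    using ray_scale_pos[of 1] by simp
qed

lemma ray_scale_mult:
  assumes "0 < a" "0 < b"
  shows "ray_scale (a * b) = ray_scale a * ray_scale b"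
proof -
  have "ray_scale (a * b) *\<^sub>R f unit_vector = f (a *\<^sub>R b *\<^sub>R unit_vector)"
    using image_scaleR_eq[OF unit_vector(2), of "a * b"] assms by simp
  also have "\<dots> = (ray_scale a * ray_scale b) *\<^sub>R f unit_vector"
    using image_scaleR_eq[of "b *\<^sub>R unit_vector" a] image_scaleR_eq[OF unit_vector(2), of b]
      assms unit_vector(2) by simp
  finally show ?thesis
    using unit_vector(2) eq_0_iff by simp
qed

lemma ray_scale_strict_mono:
  assumes "0 < s" "s < t"
  shows "ray_scale s < ray_scale t"
proof -
  have "ray_scale s = ray_scale t * ray_scale (s / t)"
    using ray_scale_mult[of t "s / t"] assms by simp
  also have "\<dots> < ray_scale t"
    using ray_scale_less_1[of "s / t"] ray_scale_pos[of t] assms by simp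
  finally show ?thesis .
qed

lemma inner_image_pos:
  assumes "0 < inner x v"
  shows "inner (f x) (f v) = ray_scale (inner x v)"
proof -
  define c where "c = inner x v"
  have "v \<noteq> 0" "0 < c"
    using assms by (auto simp: c_def)
  have "inner x ((1/c) *\<^sub>R v) = 1"
    using \<open>0 < c\<close> by (simp add: c_def)
  then have "ray_scale (1/c) * inner (f x) (f v) = 1"
    using inner_image_eq_1 image_scaleR_eq[OF \<open>v \<noteq> 0\<close>, of "1/c"] \<open>0 < c\<close> by fastforce
  have "inner (f x) (f v) = ray_scale c * ray_scale (1/c) * inner (f x) (f v)"
    using ray_scale_inverse[OF \<open>0 < c\<close>] by simp
  also have "\<dots> = ray_scale c"
    using \<open>ray_scale (1/c) * inner (f x) (f v) = 1\<close> by (simp only: mult.assoc mult_1_right)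
  finally show ?thesis
    by (simp add: c_def)
qed

lemma inner_image_0:
  assumes "inner x v = 0"
  shows "inner (f x) (f v) = 0"
proof (cases "x = 0 \<or> v = 0")
  case True
  then show ?thesis using map_0 by auto
next
  case False
  have le: "inner (f x) (f w) \<le> 0" if "inner x w = 0" for w
  proof (rule ccontr)
    assume "\<not> inner (f x) (f w) \<le> 0"
    define l where "l = max 1 (2 / inner (f x) (f w))"
    have l: "1 \<le> l" "1 < l * inner (f x) (f w)"
      using \<open>\<not> inner (f x) (f w) \<le> 0\<close> by (auto simp: l_def max_def field_simps)
    obtain t where "f (t *\<^sub>R x) = l *\<^sub>R f x"
      using image_scaleR_surj[of x l] l False by auto
    moreover have "inner (t *\<^sub>R x) w \<le> 1"
      using that by simp
    ultimately show False
      using inner_image_le_1_iff[of "t *\<^sub>R x" w] l by simp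
  qed
  obtain m where "0 < m" "f (-v) = - m *\<^sub>R f v"
    using image_segment_0_opposite[of "-v" "f (-v)"] False eq_0_iff by force
  then have "0 \<le> m * inner (f x) (f v)"
    using le[of "-v"] assms by simp
  then have "0 \<le> inner (f x) (f v)"
    using \<open>0 < m\<close> by (simp add: zero_le_mult_iff)
  then show ?thesis
    using le[of v] assms by simp
qed

text \<open>Pythagoras in the image of the right triangle with legs \<open>e\<close> and \<open>s w\<close>: the images of the legs
  are still orthogonal, so the image of the hypotenuse can only be longer.\<close>
lemma ray_scale_sum_squares_ge:
  assumes "0 < s"
  shows "1 + (ray_scale s)\<^sup>2 \<le> ray_scale (1 + s\<^sup>2)"
proof -
  define e where "e = unit_vector"
  obtain w0 where w0: "w0 \<noteq> 0" "inner e w0 = 0"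
    using orthogonal_to_vector_exists[OF DIM_ge_2, of e] by (auto simp: orthogonal_def)
  define w where "w = (1 / norm w0) *\<^sub>R w0"
  have ww: "inner w w = 1" and ew: "inner e w = 0"
    using w0 by (simp_all add: w_def inner_commute power2_norm_eq_inner[symmetric])
  have ee: "inner e e = 1"
    using unit_vector by (simp add: e_def)
  define p where "p = e + s *\<^sub>R w"
  have "inner p e = 1" "inner p w = s" "inner p p = 1 + s\<^sup>2"
    using ee ew ww
    by (simp_all add: p_def inner_add_left inner_add_right inner_commute power2_eq_square)
  then have "inner (f p) (f e) = 1" "inner (f p) (f w) = ray_scale s"
    and "inner (f p) (f p) = ray_scale (1 + s\<^sup>2)"
    using inner_image_pos ray_scale_1 assms by (simp_all add: add_pos_nonneg)
  moreover have "inner (f e) (f e) = 1" "inner (f w) (f w) = 1" "inner (f e) (f w) = 0"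
    using inner_image_pos[of e e] inner_image_pos[of w w] inner_image_0[OF ew] ee ww ray_scale_1
    by simp_all
  ultimately have "inner (f p - f e - ray_scale s *\<^sub>R f w) (f p - f e - ray_scale s *\<^sub>R f w)
      = ray_scale (1 + s\<^sup>2) - 1 - (ray_scale s)\<^sup>2"
    by (simp add: inner_diff_left inner_diff_right inner_commute power2_eq_square algebra_simps)
  then show ?thesis
    using inner_ge_zero[of "f p - f e - ray_scale s *\<^sub>R f w"] by simp
qed

lemma polar_preserving_2_inv: "polar_preserving_2 (inv f)"
  using polar_preserving_inv DIM_ge_2 by (simp add: polar_preserving_2_def polar_preserving_2_axioms_def)

lemma ray_scale_inv:
  assumes "0 < d"
  shows "polar_preserving_2.ray_scale (inv f) (ray_scale d) = d"
proof -
  interpret inv: polar_preserving_2 "inv f"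
    by (rule polar_preserving_2_inv)
  have "inner (d *\<^sub>R unit_vector) unit_vector = d"
    using unit_vector by simp
  then have "inner (f (d *\<^sub>R unit_vector)) (f unit_vector) = ray_scale d"
    using inner_image_pos assms by simp
  then have "inv.ray_scale (ray_scale d) = inner (d *\<^sub>R unit_vector) unit_vector"
    using inv.inner_image_pos[of "f (d *\<^sub>R unit_vector)" "f unit_vector"] ray_scale_pos[OF assms] inj
    by simp
  then show ?thesis
    using unit_vector by simp
qed

text \<open>Both \<open>f\<close> and \<open>f\<^sup>-\<^sup>1\<close> satisfy the inequality above, and their ray scales are mutually
  inverse increasing functions; so the inequality is an equality.\<close>
lemma ray_scale_sum_squares:
  assumes "0 < s"
  shows "ray_scale (1 + s\<^sup>2) = 1 + (ray_scale s)\<^sup>2"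
proof -
  interpret inv: polar_preserving_2 "inv f"
    by (rule polar_preserving_2_inv)
  have "inv (inv f) = f"
    using inj surj by (simp add: inv_inv_eq bij_def)
  then have ray_scale_inv': "ray_scale (inv.ray_scale y) = y" if "0 < y" for y
    using inv.ray_scale_inv[OF that] by simp
  have mono: "ray_scale a \<le> ray_scale b" if "0 < a" "a \<le> b" for a b
    using ray_scale_strict_mono[of a b] that by (cases "a = b") auto
  have pos: "0 < 1 + (ray_scale s)\<^sup>2"
    by (simp add: add_pos_nonneg)
  have "1 + s\<^sup>2 \<le> inv.ray_scale (1 + (ray_scale s)\<^sup>2)"
    using inv.ray_scale_sum_squares_ge[OF ray_scale_pos[OF assms]] ray_scale_inv[OF assms] by simp
  then have "ray_scale (1 + s\<^sup>2) \<le> ray_scale (inv.ray_scale (1 + (ray_scale s)\<^sup>2))"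
    by (intro mono) (simp_all add: add_pos_nonneg)
  also have "\<dots> = 1 + (ray_scale s)\<^sup>2"
    using ray_scale_inv'[OF pos] .
  finally show ?thesis
    using ray_scale_sum_squares_ge[OF assms] by simp
qed

lemma ray_scale_eq:
  assumes "0 < t"
  shows "ray_scale t = t"
proof (rule multiplicative_shift_eq_id[OF ray_scale_mult ray_scale_strict_mono ray_scale_1 _ assms])
  fix x :: real
  assume "0 < x"
  then have "ray_scale x = (ray_scale (sqrt x))\<^sup>2"
    using ray_scale_mult[of "sqrt x" "sqrt x"] by (simp add: power2_eq_square)
  then show "ray_scale (1 + x) = 1 + ray_scale x"
    using ray_scale_sum_squares[of "sqrt x"] \<open>0 < x\<close> by simp
qed

lemma map_uminus: "f (- v) = - f v"
proof (cases "v = 0")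
  case True
  then show ?thesis using map_0 by simp
next
  case False
  obtain m where m: "0 < m" "f (-v) = - m *\<^sub>R f v"
    using image_segment_0_opposite[of "-v" "f (-v)"] False eq_0_iff by force
  have norm_image: "inner (f u) (f u) = inner u u" if "u \<noteq> 0" for u
    using inner_image_pos[of u u] ray_scale_eq that by simp
  have "inner v v = inner (f (-v)) (f (-v))"
    using norm_image[of "-v"] False by simp
  also have "\<dots> = m\<^sup>2 * inner (f v) (f v)"
    using m(2) by (simp add: power2_eq_square)
  also have "\<dots> = m\<^sup>2 * inner v v"
    using norm_image False by simp
  finally have "m\<^sup>2 = 1"
    using False by simp
  then have "m = 1"
    using m(1) by (simp add: power2_eq_1_iff)
  then show ?thesis
    using m by simp
qed

lemma inner_image: "inner (f x) (f v) = inner x v"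
proof (cases rule: linorder_cases[of "inner x v" 0])
  case less
  then have "inner (f x) (f (- v)) = inner x (- v)"
    using inner_image_pos ray_scale_eq by simp
  then show ?thesis
    by (simp add: map_uminus)
qed (use inner_image_0 inner_image_pos ray_scale_eq in auto)

lemma orthogonal_transformation: "orthogonal_transformation f"
  unfolding orthogonal_transformation_isometry
proof (intro conjI allI)
  show "f 0 = 0"
    by (rule map_0)
  fix x y
  have "inner (f x - f y) (f x - f y) = inner (x - y) (x - y)"
    by (simp add: inner_diff_left inner_diff_right inner_image)
  then show "dist (f x) (f y) = dist x y"
    by (simp add: dist_norm norm_eq_sqrt_inner)
qed

end

theorem proposition5p3:
  fixes f :: "real ^ 'n \<Rightarrow> real ^ 'n"
  assumes "CARD('n) \<ge> 2"
    and "inj f"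
    and "\<forall>A\<in>K0. f ` (polar A) = polar (f ` A)"
  shows "orthogonal_transformation f"
proof -
  interpret polar_preserving_2 f
    using assms by unfold_locales auto
  show ?thesis
    by (rule orthogonal_transformation)
qed

end
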